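(* Let $\mathcal{A}$ be a complex Banach algebra with unity, $c\in\mathcal{A}$, and $M=\begin{pmatrix}1&1\\ c&0\end{pmatrix}\in M_{2}(\mathcal{A})$. Then $c\in\mathcal{A}^{qnil}$ if and only if $M$ is g-Hirano invertible in $M_{2}(\mathcal{A})$.
   Context: $M_{2}(\mathcal{A})$ is the Banach algebra of $2\times2$ matrices over $\mathcal{A}$. For a unital Banach algebra $\mathcal{B}$, $\mathcal{B}^{qnil}$ is the set of elements with spectrum $\{0\}$. An element $a\in\mathcal{B}$ is g-Hirano invertible if there exists $x\in\mathcal{B}$ with $xax=x$, $ax=xa$ and $a^{2}-ax\in\mathcal{B}^{qnil}$. *)

theory Defs
  imports "HOL-Analysis.Analysis"
begin

class cx_algebra_1 = ring_1 +
  fixes scaleC :: "complex \<Rightarrow> 'a \<Rightarrow> 'a"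
  assumes scaleC_add_right: "scaleC z (x + y) = scaleC z x + scaleC z y"
    and scaleC_add_left: "scaleC (z + w) x = scaleC z x + scaleC w x"
    and scaleC_scaleC: "scaleC z (scaleC w x) = scaleC (z * w) x"
    and scaleC_one: "scaleC 1 x = x"
    and scaleC_mult_left: "scaleC z x * y = scaleC z (x * y)"
    and scaleC_mult_right: "x * scaleC z y = scaleC z (x * y)"

class cx_banach_algebra_1 = cx_algebra_1 + real_normed_algebra_1 + banach +
  assumes scaleC_of_real: "scaleC (complex_of_real r) x = scaleR r x"
    and norm_scaleC: "norm (scaleC z x) = cmod z * norm x"

definition inv_in :: "'a::ring_1 \<Rightarrow> bool" where
  "inv_in a \<longleftrightarrow> (\<exists>b. a * b = 1 \<and> b * a = 1)"

definition cspectrum :: "'a::cx_algebra_1 \<Rightarrow> complex set" where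
  "cspectrum a = {z. \<not> inv_in (a - scaleC z 1)}"

definition qnil :: "'a::cx_algebra_1 \<Rightarrow> bool" where
  "qnil a \<longleftrightarrow> cspectrum a = {0}"

definition g_hirano :: "'a::cx_algebra_1 \<Rightarrow> bool" where
  "g_hirano a \<longleftrightarrow> (\<exists>x. x * a * x = x \<and> a * x = x * a \<and> qnil (a ^ 2 - a * x))"

datatype 'a m2 = M2 (e11: 'a) (e12: 'a) (e21: 'a) (e22: 'a)

instantiation m2 :: (ring_1) ring_1
begin
definition "0 = M2 0 0 0 0"
definition "1 = M2 1 0 0 1"
definition "a + b = M2 (e11 a + e11 b) (e12 a + e12 b) (e21 a + e21 b) (e22 a + e22 b)"
definition "a - b = M2 (e11 a - e11 b) (e12 a - e12 b) (e21 a - e21 b) (e22 a - e22 b)"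
definition "- a = M2 (- e11 a) (- e12 a) (- e21 a) (- e22 a)"
definition "a * b = M2 (e11 a * e11 b + e12 a * e21 b) (e11 a * e12 b + e12 a * e22 b)
                      (e21 a * e11 b + e22 a * e21 b) (e21 a * e12 b + e22 a * e22 b)"
instance
  by standard
    (simp_all add: zero_m2_def one_m2_def plus_m2_def minus_m2_def uminus_m2_def
      times_m2_def algebra_simps)
end

instantiation m2 :: (cx_algebra_1) cx_algebra_1
begin
definition scaleC_m2 :: "complex \<Rightarrow> 'a m2 \<Rightarrow> 'a m2" where
  "scaleC_m2 z a = M2 (scaleC z (e11 a)) (scaleC z (e12 a)) (scaleC z (e21 a)) (scaleC z (e22 a))"
instance
  by standard
    (simp_all add: scaleC_m2_def plus_m2_def times_m2_def scaleC_add_right scaleC_add_left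
      scaleC_scaleC scaleC_one scaleC_mult_left scaleC_mult_right)
end

end

theory Submission
  imports Defs "HOL-Computational_Algebra.Formal_Power_Series"
begin

(* The companion matrix M = [[1, 1], [c, 0]] satisfies M\<^sup>2 - M = c I.

   If c is quasinilpotent, the binomial series for (1 + 4c)\<^sup>1\<^sup>/\<^sup>2 yields a quasinilpotent t
   with t\<^sup>2 + t = c, and T = t I commutes with M and satisfies M\<^sup>2 - M = T\<^sup>2 + T. Then
   p = (1 + 2T)\<^sup>-\<^sup>1 (M + T) is an idempotent, x = (1 + T)\<^sup>-\<^sup>1 p satisfies x M x = x and
   M x = x M, and M\<^sup>2 - M x = (T\<^sup>2 + 2T) p + T\<^sup>2 (1 - p) is quasinilpotent by spectral
   mapping for quadratics.

   Conversely, if x is a g-Hirano inverse of a, then p = a x is idempotent and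
   a\<^sup>2 = (N + 1) p + N (1 - p) with N = a\<^sup>2 - a x quasinilpotent, so the spectrum of a lies in
   {-1, 0, 1}. A Schur complement shows that \<xi>\<^sup>2 - \<xi> in the spectrum of c puts \<xi> in the
   spectrum of M; every nonzero number is \<xi>\<^sup>2 - \<xi> for some \<xi> outside {-1, 0, 1}, and the
   spectrum of c is nonempty, so it is {0}.

   The analytic input (quasinilpotent elements have \<parallel>c\<^sup>n\<parallel>\<^sup>1\<^sup>/\<^sup>n \<longrightarrow> 0, and spectra are
   nonempty) is obtained without complex integration, by averaging the resolvent over roots
   of unity. *)

context cx_algebra_1
begin

lemma scaleC_zero_left [simp]: "scaleC 0 x = 0"
  using scaleC_add_left [of 0 0 x] by simp

lemma scaleC_zero_right [simp]: "scaleC z 0 = 0"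
  using scaleC_add_right [of z 0 0] by simp

lemma scaleC_minus_left: "scaleC (- z) x = - scaleC z x"
  using scaleC_add_left [of "- z" z x] by (simp add: eq_neg_iff_add_eq_0)

lemma scaleC_diff_left: "scaleC (z - w) x = scaleC z x - scaleC w x"
  using scaleC_add_left [of z "- w" x] by (simp add: scaleC_minus_left)

lemma scaleC_diff_right: "scaleC z (x - y) = scaleC z x - scaleC z y"
  using scaleC_add_right [of z "x - y" y] by (simp add: eq_diff_eq)

lemma scaleC_cancel_left:
  assumes "z \<noteq> 0" "scaleC z x = scaleC z y"
  shows "x = y"
proof -
  have "scaleC (1 / z) (scaleC z x) = scaleC (1 / z) (scaleC z y)"
    using assms(2) by simp
  with assms(1) show ?thesis
    by (simp add: scaleC_scaleC scaleC_one)
qed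

lemma scaleC_one_commute: "scaleC z 1 * x = x * scaleC z 1"
  by (simp add: scaleC_mult_left scaleC_mult_right)

lemma scaleC_power: "scaleC z x ^ n = scaleC (z ^ n) (x ^ n)"
  by (induction n) (simp_all add: scaleC_one scaleC_mult_left scaleC_mult_right scaleC_scaleC mult.commute)

lemma scaleC_sum_left: "scaleC (sum f A) x = (\<Sum>i\<in>A. scaleC (f i) x)"
  by (induction A rule: infinite_finite_induct) (simp_all add: scaleC_add_left)

lemma scaleC_of_nat: "scaleC (of_nat n) x = of_nat n * x"
  by (induction n) (simp_all add: scaleC_add_left scaleC_one distrib_right)

lemma scaleC_numeral: "scaleC (numeral n) x = numeral n * x"
  using scaleC_of_nat [of "numeral n" x] by simp

end

definition the_inverse :: "'a::ring_1 \<Rightarrow> 'a" where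
  "the_inverse a = (SOME b. a * b = 1 \<and> b * a = 1)"

lemma
  assumes "inv_in a"
  shows right_inverse_the_inverse: "a * the_inverse a = 1"
    and left_inverse_the_inverse: "the_inverse a * a = 1"
proof -
  from assms obtain b where "a * b = 1 \<and> b * a = 1"
    unfolding inv_in_def by blast
  then have "a * the_inverse a = 1 \<and> the_inverse a * a = 1"
    unfolding the_inverse_def by (rule someI)
  then show "a * the_inverse a = 1" "the_inverse a * a = 1"
    by auto
qed

lemma inv_in_one [simp]: "inv_in (1::'a::ring_1)"
  by (auto simp: inv_in_def)

lemma inv_in_mult:
  fixes a b :: "'a::ring_1"
  assumes "inv_in a" "inv_in b"
  shows "inv_in (a * b)"
proof -
  obtain a' b' where "a * a' = 1" "a' * a = 1" "b * b' = 1" "b' * b = 1"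
    using assms by (auto simp: inv_in_def)
  moreover have "(a * b) * (b' * a') = a * (b * b') * a'" "(b' * a') * (a * b) = b' * (a' * a) * b"
    by (simp_all only: mult.assoc)
  ultimately have "(a * b) * (b' * a') = 1" "(b' * a') * (a * b) = 1"
    by simp_all
  then show ?thesis
    by (auto simp: inv_in_def)
qed

lemma inv_in_if_left_right_inverse:
  fixes a :: "'a::ring_1"
  assumes "a * b = 1" "c * a = 1"
  shows "inv_in a"
proof -
  have "c = b"
    by (metis assms mult.assoc mult_1_left mult_1_right)
  then show ?thesis
    using assms by (auto simp: inv_in_def)
qed

lemma inv_in_commuting_factors:
  fixes a b :: "'a::ring_1"
  assumes "a * b = b * a" "inv_in (a * b)"
  shows "inv_in a" "inv_in b"
proof -
  obtain y where y: "a * b * y = 1" "y * (a * b) = 1"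
    using assms(2) by (auto simp: inv_in_def)
  have "a * (b * y) = 1" "(y * b) * a = 1" "b * (a * y) = 1" "(y * a) * b = 1"
    using y assms(1) by (metis mult.assoc)+
  then show "inv_in a" "inv_in b"
    by (auto intro: inv_in_if_left_right_inverse)
qed

lemma inverse_commute:
  fixes a b d :: "'a::ring_1"
  assumes "a * b = 1" "b * a = 1" "a * d = d * a"
  shows "b * d = d * b"
proof -
  have "b * d = b * d * a * b"
    using assms(1) by (simp add: mult.assoc)
  also have "\<dots> = b * (a * d) * b"
    using assms(3) by (simp add: mult.assoc)
  also have "\<dots> = d * b"
    using assms(2) by (simp flip: mult.assoc)
  finally show ?thesis .
qed

lemma mult_left_commute_if_commute:
  fixes a b c :: "'a::semigroup_mult"
  assumes "a * b = b * a"
  shows "a * (b * c) = b * (a * c)"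
  by (metis assms mult.assoc)

lemma diff_inverses:
  fixes a a' b b' :: "'a::ring_1"
  assumes "a * b = 1" "b' * a' = 1"
  shows "b' - b = b' * (a - a') * b"
proof -
  have "b' * (a - a') * b = b' * (a * b) - (b' * a') * b"
    by (simp add: algebra_simps)
  then show ?thesis
    using assms by simp
qed

lemma ring_one_diff_power_eq:
  fixes v :: "'a::ring_1"
  shows "1 - v ^ n = (1 - v) * (\<Sum>j<n. v ^ j)" and "1 - v ^ n = (\<Sum>j<n. v ^ j) * (1 - v)"
proof -
  have "1 - v ^ n = (1 - v) * (\<Sum>j<n. v ^ j) \<and> 1 - v ^ n = (\<Sum>j<n. v ^ j) * (1 - v)"
    by (induction n) (simp_all add: algebra_simps power_commutes)
  then show "1 - v ^ n = (1 - v) * (\<Sum>j<n. v ^ j)" "1 - v ^ n = (\<Sum>j<n. v ^ j) * (1 - v)"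
    by auto
qed

lemma power_mult_commuting:
  fixes c d :: "'a::ring_1"
  assumes "c * d = d * c"
  shows "(c * d) ^ n = c ^ n * d ^ n"
proof (induction n)
  case (Suc n)
  have "d * c ^ n = c ^ n * d"
    using power_commuting_commutes [OF assms] by simp
  then show ?case
    by (simp add: Suc) (metis mult.assoc)
qed simp

lemma inv_in_idempotent_split:
  fixes p X Y :: "'a::ring_1"
  assumes p: "p * p = p" and Xp: "X * p = p * X" and Yp: "Y * p = p * Y"
    and "inv_in X" "inv_in Y"
  shows "inv_in (X * p + Y * (1 - p))"
proof -
  obtain X' Y' where X': "X * X' = 1" "X' * X = 1" and Y': "Y * Y' = 1" "Y' * Y = 1"
    using assms(4,5) by (auto simp: inv_in_def)
  have X'p: "X' * p = p * X'" and Y'p: "Y' * p = p * Y'"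
    using inverse_commute [OF X' Xp] inverse_commute [OF Y' Yp] by simp_all
  have commute_q: "Z * (1 - p) = (1 - p) * Z" if "Z * p = p * Z" for Z
    using that by (simp add: algebra_simps)
  have q: "p * (1 - p) = 0" "(1 - p) * p = 0" "(1 - p) * (1 - p) = 1 - p"
    using p by (simp_all add: algebra_simps)
  define W where "W = X' * p + Y' * (1 - p)"
  have "(X * p + Y * (1 - p)) * W = X * (p * X') * p + X * (p * Y') * (1 - p)
      + Y * ((1 - p) * X') * p + Y * ((1 - p) * Y') * (1 - p)"
    by (simp add: W_def algebra_simps)
  also have "\<dots> = X * X' * (p * p) + X * Y' * (p * (1 - p))
      + Y * X' * ((1 - p) * p) + Y * Y' * ((1 - p) * (1 - p))"
    by (simp only: mult.assoc flip: X'p Y'p commute_q [OF X'p] commute_q [OF Y'p])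
  finally have "(X * p + Y * (1 - p)) * W = 1"
    by (simp add: X' Y' p q)
  moreover have "W * (X * p + Y * (1 - p)) = X' * (p * X) * p + X' * (p * Y) * (1 - p)
      + Y' * ((1 - p) * X) * p + Y' * ((1 - p) * Y) * (1 - p)"
    by (simp add: W_def algebra_simps)
  moreover have "\<dots> = X' * X * (p * p) + X' * Y * (p * (1 - p))
      + Y' * X * ((1 - p) * p) + Y' * Y * ((1 - p) * (1 - p))"
    by (simp only: mult.assoc flip: Xp Yp commute_q [OF Xp] commute_q [OF Yp])
  ultimately show ?thesis
    by (auto simp: inv_in_def X' Y' p q)
qed

lemma inv_in_scaleC:
  fixes a :: "'a::cx_algebra_1"
  assumes "inv_in a" "z \<noteq> 0"
  shows "inv_in (scaleC z a)"
proof -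
  obtain b where "a * b = 1" "b * a = 1"
    using assms(1) by (auto simp: inv_in_def)
  then have "scaleC z a * scaleC (1 / z) b = 1" "scaleC (1 / z) b * scaleC z a = 1"
    using assms(2) by (simp_all add: scaleC_mult_left scaleC_mult_right scaleC_scaleC scaleC_one)
  then show ?thesis
    by (auto simp: inv_in_def)
qed

lemma cspectrum_plus_one: "z \<in> cspectrum (a + 1) \<longleftrightarrow> z - 1 \<in> cspectrum a"
proof -
  have "a + 1 - scaleC z 1 = a - scaleC (z - 1) 1"
    by (simp add: scaleC_diff_left scaleC_one algebra_simps)
  then show ?thesis
    by (simp only: cspectrum_def mem_Collect_eq)
qed

lemma inv_in_one_minus_scaleC_iff:
  fixes a :: "'a::cx_algebra_1"
  assumes "l \<noteq> 0"
  shows "inv_in (1 - scaleC l a) \<longleftrightarrow> 1 / l \<notin> cspectrum a"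
proof -
  have "scaleC (- l) (a - scaleC (1 / l) 1) = 1 - scaleC l a"
    "scaleC (- 1 / l) (1 - scaleC l a) = a - scaleC (1 / l) 1"
    using assms by (simp_all add: scaleC_diff_right scaleC_scaleC scaleC_minus_left scaleC_one
        scaleC_diff_left algebra_simps)
  then show ?thesis
    using assms inv_in_scaleC [of "a - scaleC (1 / l) 1" "- l"] inv_in_scaleC [of "1 - scaleC l a" "- 1 / l"]
    by (auto simp: cspectrum_def)
qed

lemma cspectrum_idempotent_split:
  fixes p X Y :: "'a::cx_algebra_1"
  assumes "p * p = p" "X * p = p * X" "Y * p = p * Y"
  shows "cspectrum (X * p + Y * (1 - p)) \<subseteq> cspectrum X \<union> cspectrum Y"
proof
  fix z
  assume z: "z \<in> cspectrum (X * p + Y * (1 - p))"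
  have "(X - scaleC z 1) * p + (Y - scaleC z 1) * (1 - p) = X * p + Y * (1 - p) - scaleC z 1"
    by (simp add: algebra_simps)
  moreover have "(X - scaleC z 1) * p = p * (X - scaleC z 1)" "(Y - scaleC z 1) * p = p * (Y - scaleC z 1)"
    using assms(2,3) by (simp_all add: algebra_simps scaleC_one_commute)
  then have "inv_in ((X - scaleC z 1) * p + (Y - scaleC z 1) * (1 - p))"
    if "z \<notin> cspectrum X \<union> cspectrum Y"
    using that by (intro inv_in_idempotent_split [OF assms(1)]) (auto simp: cspectrum_def)
  ultimately show "z \<in> cspectrum X \<union> cspectrum Y"
    using z by (auto simp: cspectrum_def)
qed

lemma quadratic_factorization:
  fixes a :: "'a::cx_algebra_1"
  assumes "\<xi> + \<zeta> = - \<beta>" "\<xi> * \<zeta> = - z"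
  shows "a * a + scaleC \<beta> a - scaleC z 1 = (a - scaleC \<xi> 1) * (a - scaleC \<zeta> 1)"
proof -
  have "(a - scaleC \<xi> 1) * (a - scaleC \<zeta> 1) = a * a - scaleC (\<xi> + \<zeta>) a + scaleC (\<xi> * \<zeta>) 1"
    by (simp add: algebra_simps scaleC_mult_left scaleC_mult_right scaleC_scaleC scaleC_add_left
        scaleC_diff_right mult.commute [of \<zeta>])
  then show ?thesis
    using assms by (simp add: scaleC_minus_left)
qed

lemma cspectrum_quadratic_roots:
  fixes a :: "'a::cx_algebra_1"
  assumes "\<xi> + \<zeta> = - \<beta>" "\<xi> * \<zeta> = - z"
  shows "z \<in> cspectrum (a * a + scaleC \<beta> a) \<longleftrightarrow> \<xi> \<in> cspectrum a \<or> \<zeta> \<in> cspectrum a"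
proof -
  have "(a - scaleC \<xi> 1) * (a - scaleC \<zeta> 1) = (a - scaleC \<zeta> 1) * (a - scaleC \<xi> 1)"
    using quadratic_factorization [of \<xi> \<zeta> \<beta> z a] quadratic_factorization [of \<zeta> \<xi> \<beta> z a] assms
    by (simp add: add.commute mult.commute)
  then have "inv_in (a * a + scaleC \<beta> a - scaleC z 1)
      \<longleftrightarrow> inv_in (a - scaleC \<xi> 1) \<and> inv_in (a - scaleC \<zeta> 1)"
    using quadratic_factorization [OF assms, of a] inv_in_commuting_factors inv_in_mult by metis
  then show ?thesis
    by (auto simp: cspectrum_def)
qed

text \<open>Spectral mapping for quadratic polynomials, valid in every complex algebra: they split into
  commuting linear factors.\<close>

lemma cspectrum_quadratic:
  fixes a :: "'a::cx_algebra_1"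
  shows "z \<in> cspectrum (a * a + scaleC \<beta> a) \<longleftrightarrow> (\<exists>\<xi>\<in>cspectrum a. z = \<xi>\<^sup>2 + \<beta> * \<xi>)"
proof
  assume z: "z \<in> cspectrum (a * a + scaleC \<beta> a)"
  define s where "s = csqrt (\<beta>\<^sup>2 + 4 * z)"
  define \<xi>\<^sub>1 where "\<xi>\<^sub>1 = (- \<beta> + s) / 2"
  define \<xi>\<^sub>2 where "\<xi>\<^sub>2 = (- \<beta> - s) / 2"
  have "\<xi>\<^sub>1 * \<xi>\<^sub>2 = (\<beta>\<^sup>2 - s\<^sup>2) / 4"
    by (simp add: \<xi>\<^sub>1_def \<xi>\<^sub>2_def field_simps power2_eq_square)
  then have roots: "\<xi>\<^sub>1 + \<xi>\<^sub>2 = - \<beta>" "\<xi>\<^sub>1 * \<xi>\<^sub>2 = - z"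
    by (simp_all add: \<xi>\<^sub>1_def \<xi>\<^sub>2_def s_def field_simps)
  then have "z = \<xi>\<^sub>1\<^sup>2 + \<beta> * \<xi>\<^sub>1" "z = \<xi>\<^sub>2\<^sup>2 + \<beta> * \<xi>\<^sub>2"
    by algebra+
  then show "\<exists>\<xi>\<in>cspectrum a. z = \<xi>\<^sup>2 + \<beta> * \<xi>"
    using cspectrum_quadratic_roots [OF roots] z by blast
next
  assume "\<exists>\<xi>\<in>cspectrum a. z = \<xi>\<^sup>2 + \<beta> * \<xi>"
  then obtain \<xi> where "\<xi> \<in> cspectrum a" "z = \<xi>\<^sup>2 + \<beta> * \<xi>"
    by blast
  moreover have "\<xi> + (- \<beta> - \<xi>) = - \<beta>" "\<xi> * (- \<beta> - \<xi>) = - z"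
    using calculation(2) by (simp_all add: algebra_simps power2_eq_square)
  ultimately show "z \<in> cspectrum (a * a + scaleC \<beta> a)"
    using cspectrum_quadratic_roots by blast
qed

lemma cspectrum_quadratic_subset_if_qnil:
  fixes T :: "'a::cx_algebra_1"
  assumes "qnil T"
  shows "cspectrum (T * T + scaleC \<beta> T) \<subseteq> {0}"
  using assms cspectrum_quadratic [of _ T \<beta>] by (auto simp: qnil_def)

section \<open>Generalized Hirano inverses\<close>

lemma g_hirano_cspectrum:
  fixes a :: "'a::cx_algebra_1"
  assumes "g_hirano a"
  shows "cspectrum a \<subseteq> {-1, 0, 1}"
proof
  obtain x where x: "x * a * x = x" "a * x = x * a" and N: "qnil (a\<^sup>2 - a * x)"
    using assms by (auto simp: g_hirano_def)
  define p where "p = a * x"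
  define N where "N = a\<^sup>2 - p"
  have p: "p * p = p"
    using x(1) by (simp add: p_def mult.assoc)
  have "a * p = p * a"
    unfolding p_def by (metis x(2) mult.assoc)
  then have "a * a * p = p * (a * a)"
    by (metis mult.assoc)
  then have Np: "N * p = p * N"
    by (simp add: N_def power2_eq_square left_diff_distrib right_diff_distrib)
  then have Np1: "(N + 1) * p = p * (N + 1)"
    by (simp add: distrib_left distrib_right)
  have "a * a = (N + 1) * p + N * (1 - p)"
    by (simp add: N_def power2_eq_square algebra_simps)
  then have "cspectrum (a * a) \<subseteq> cspectrum (N + 1) \<union> cspectrum N"
    using cspectrum_idempotent_split [OF p Np1 Np] by simp
  also have "\<dots> \<subseteq> {0, 1}"
  proof -
    have "qnil N"
      using N by (simp add: N_def p_def)
    then show ?thesis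
      using cspectrum_plus_one [of _ N] by (auto simp: qnil_def)
  qed
  finally have sq: "cspectrum (a * a) \<subseteq> {0, 1}" .
  fix \<xi>
  assume "\<xi> \<in> cspectrum a"
  then have "\<xi>\<^sup>2 \<in> cspectrum (a * a + scaleC 0 a)"
    using cspectrum_quadratic [of "\<xi>\<^sup>2" a 0] by auto
  then have "\<xi>\<^sup>2 \<in> cspectrum (a * a)"
    by simp
  with sq show "\<xi> \<in> {-1, 0, 1}"
    by (auto simp: power2_eq_1_iff)
qed

text \<open>If \<open>m\<^sup>2 - m = T\<^sup>2 + T\<close> for a commuting \<open>T\<close>, then \<open>(m + T)\<^sup>2 = (1 + 2T)(m + T)\<close>,
  so \<open>p = (1 + 2T)\<^sup>-\<^sup>1(m + T)\<close> is idempotent and \<open>x = (1 + T)\<^sup>-\<^sup>1 p\<close> satisfies \<open>m x = p\<close>.\<close>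

lemma idempotent_if_mult_self_eq:
  fixes Q S u :: "'a::ring_1"
  assumes "S * u = 1" "Q * Q = u * Q" "Q * S = S * Q"
  shows "(S * Q) * (S * Q) = S * Q"
proof -
  have "(S * Q) * (S * Q) = S * (S * (Q * Q))"
    by (simp add: mult.assoc mult_left_commute_if_commute [OF assms(3)])
  also have "\<dots> = S * ((S * u) * Q)"
    by (simp add: assms(2) mult.assoc)
  finally show ?thesis
    by (simp add: assms(1))
qed

lemma quadratic_inner_inverse:
  fixes m T :: "'a::ring_1"
  assumes mT: "m * T = T * m" and m: "m * m = m + T * T + T"
    and "inv_in (1 + T)" "inv_in (1 + T + T)"
  obtains x p where "x * m * x = x" "m * x = x * m" "p * p = p" "p * T = T * p"
    "m * m - m * x = T * T + (T + T) * p"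
proof -
  obtain S where S: "(1 + T + T) * S = 1" "S * (1 + T + T) = 1"
    using assms(4) by (auto simp: inv_in_def)
  obtain V where V: "(1 + T) * V = 1" "V * (1 + T) = 1"
    using assms(3) by (auto simp: inv_in_def)
  have ST: "S * T = T * S" and Sm: "S * m = m * S"
    using inverse_commute [OF S, of T] inverse_commute [OF S, of m] mT
    by (simp_all add: algebra_simps)
  have Vm: "V * m = m * V"
    using inverse_commute [OF V, of m] mT by (simp add: algebra_simps)
  define Q where "Q = m + T"
  have QQ: "Q * Q = (1 + T + T) * Q" and mQ: "m * Q = (1 + T) * Q"
    by (simp_all add: Q_def distrib_left distrib_right m mT add_ac)
  have QS: "Q * S = S * Q" and Qm: "Q * m = m * Q" and QT: "Q * T = T * Q"
    and S1T: "S * (1 + T) = (1 + T) * S"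
    by (simp_all add: Q_def distrib_left distrib_right ST Sm mT)
  define p where "p = S * Q"
  define x where "x = V * p"
  note left_commute = mult_left_commute_if_commute
  have pp: "p * p = p"
    unfolding p_def using S(2) QQ QS by (rule idempotent_if_mult_self_eq)
  have mx: "m * x = p"
  proof -
    have "m * x = V * (S * (m * Q))"
      by (simp add: x_def p_def mult.assoc left_commute [OF Vm [symmetric]]
          left_commute [OF Sm [symmetric]])
    also have "\<dots> = (V * (1 + T)) * (S * Q)"
      by (simp add: mQ mult.assoc left_commute [OF S1T])
    finally show ?thesis
      by (simp add: V p_def)
  qed
  have xm: "x * m = m * x"
    by (simp add: x_def p_def mult.assoc Qm left_commute [OF Vm [symmetric]]
        left_commute [OF Sm [symmetric]])
  have xmx: "x * m * x = x"
    using mx pp by (simp add: x_def mult.assoc)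
  have pT: "p * T = T * p"
    by (simp add: p_def mult.assoc QT left_commute [OF ST])
  have Q: "(1 + T + T) * p = m + T"
    using S(1) by (simp add: p_def Q_def flip: mult.assoc)
  have "m * m - m * x = T * T + ((1 + T + T) * p - p)"
    by (simp only: m mx Q) (simp add: algebra_simps)
  then have "m * m - m * x = T * T + (T + T) * p"
    by (simp add: algebra_simps)
  then show ?thesis
    by (rule that [OF xmx xm [symmetric] pp pT])
qed

lemma qnil_quadratic_idempotent_perturbation:
  fixes T p :: "'a::cx_algebra_1"
  assumes T: "qnil T" and p: "p * p = p" "p * T = T * p"
  shows "qnil (T * T + (T + T) * p)"
proof -
  have "cspectrum (T * T + (T + T) * p) \<subseteq> {0}"
  proof -
    have "T * T * p = p * (T * T)"
      using p(2) by (metis mult.assoc)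
    have "T * T + (T + T) * p = (T * T + scaleC 2 T) * p + (T * T + scaleC 0 T) * (1 - p)"
      by (simp add: scaleC_numeral algebra_simps mult_2)
    then have "cspectrum (T * T + (T + T) * p)
        \<subseteq> cspectrum (T * T + scaleC 2 T) \<union> cspectrum (T * T + scaleC 0 T)"
      using p \<open>T * T * p = p * (T * T)\<close> by (simp only:, intro cspectrum_idempotent_split)
        (simp_all add: distrib_left distrib_right scaleC_mult_left scaleC_mult_right)
    also have "\<dots> \<subseteq> {0}"
      using cspectrum_quadratic_subset_if_qnil [OF T] by (metis Un_least)
    finally show ?thesis .
  qed
  moreover have "0 \<in> cspectrum (T * T + (T + T) * p)"
  proof -
    have "T * T + (T + T) * p = T * (T + p + p)" and comm: "T * (T + p + p) = (T + p + p) * T"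
      using p(2) by (simp_all add: algebra_simps)
    moreover have "0 \<in> cspectrum T"
      using T by (simp add: qnil_def)
    then have "\<not> inv_in (T * (T + p + p))"
      using inv_in_commuting_factors(1) [OF comm] by (auto simp: cspectrum_def)
    ultimately show ?thesis
      by (simp add: cspectrum_def)
  qed
  ultimately show ?thesis
    by (auto simp: qnil_def)
qed

lemma g_hirano_if_quadratic:
  fixes m T :: "'a::cx_algebra_1"
  assumes "m * T = T * m" "m * m = m + T * T + T" and T: "qnil T"
  shows "g_hirano m"
proof -
  have "inv_in (1 - scaleC z T)" if "z \<noteq> 0" for z
    using T that by (simp add: inv_in_one_minus_scaleC_iff qnil_def)
  from this [of "- 1"] this [of "- 2"] have "inv_in (1 + T)" "inv_in (1 + T + T)"
    by (simp_all add: scaleC_minus_left scaleC_one scaleC_numeral mult_2 algebra_simps)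
  with assms(1,2) obtain x p where x: "x * m * x = x" "m * x = x * m"
    and p: "p * p = p" "p * T = T * p" and N: "m * m - m * x = T * T + (T + T) * p"
    by (rule quadratic_inner_inverse)
  have "qnil (m\<^sup>2 - m * x)"
    using qnil_quadratic_idempotent_perturbation [OF T p] by (simp add: N power2_eq_square)
  with x show ?thesis
    unfolding g_hirano_def by blast
qed

section \<open>The companion matrix\<close>

lemma times_M2 [simp]:
  "M2 a b c d * M2 a' b' c' d' = M2 (a * a' + b * c') (a * b' + b * d') (c * a' + d * c') (c * b' + d * d')"
  by (simp add: times_m2_def)

lemma plus_M2 [simp]: "M2 a b c d + M2 a' b' c' d' = M2 (a + a') (b + b') (c + c') (d + d')"
  by (simp add: plus_m2_def)

lemma minus_M2 [simp]: "M2 a b c d - M2 a' b' c' d' = M2 (a - a') (b - b') (c - c') (d - d')"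
  by (simp add: minus_m2_def)

lemma scaleC_M2 [simp]: "scaleC z (M2 a b c d) = M2 (scaleC z a) (scaleC z b) (scaleC z c) (scaleC z d)"
  by (simp add: scaleC_m2_def)

lemma one_m2_eq: "(1::'a::ring_1 m2) = M2 1 0 0 1"
  by (simp add: one_m2_def)

definition m2_diag :: "'a::ring_1 \<Rightarrow> 'a m2" where
  "m2_diag a = M2 a 0 0 a"

lemma m2_diag_mult: "m2_diag a * m2_diag b = m2_diag (a * b)"
  by (simp add: m2_diag_def)

lemma m2_diag_add: "m2_diag a + m2_diag b = m2_diag (a + b)"
  by (simp add: m2_diag_def)

lemma m2_diag_one: "m2_diag 1 = 1"
  by (simp add: m2_diag_def one_m2_eq)

lemma inv_in_m2_diag_iff: "inv_in (m2_diag a) \<longleftrightarrow> inv_in a"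
proof
  assume "inv_in (m2_diag a)"
  then obtain Y where Y: "m2_diag a * Y = 1" "Y * m2_diag a = 1"
    by (auto simp: inv_in_def)
  obtain p q r s where "Y = M2 p q r s"
    by (cases Y)
  with Y have "a * p = 1" "p * a = 1"
    by (simp_all add: m2_diag_def one_m2_eq)
  then show "inv_in a"
    by (auto simp: inv_in_def)
next
  assume "inv_in a"
  then obtain b where "a * b = 1" "b * a = 1"
    by (auto simp: inv_in_def)
  then have "m2_diag a * m2_diag b = 1" "m2_diag b * m2_diag a = 1"
    by (simp_all add: m2_diag_mult m2_diag_one)
  then show "inv_in (m2_diag a)"
    by (auto simp: inv_in_def)
qed

lemma cspectrum_m2_diag: "cspectrum (m2_diag a) = cspectrum a"
proof -
  have "m2_diag a - scaleC z 1 = m2_diag (a - scaleC z 1)" for z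
    by (simp add: m2_diag_def one_m2_eq)
  then show ?thesis
    by (simp add: cspectrum_def inv_in_m2_diag_iff)
qed

lemma companion_mult_self: "M2 1 1 c 0 * M2 1 1 c 0 = M2 1 1 c 0 + m2_diag c"
  by (simp add: m2_diag_def)

lemma m2_diag_commute_companion:
  "a * c = c * a \<Longrightarrow> M2 1 1 c 0 * m2_diag a = m2_diag a * M2 1 1 c 0"
  by (simp add: m2_diag_def)

text \<open>Schur complement: the \<open>(1,2)\<close> entry of \<open>(M - \<xi>)\<^sup>-\<^sup>1\<close> inverts \<open>c - (\<xi>\<^sup>2 - \<xi>)\<close>.\<close>

lemma cspectrum_companion:
  fixes c :: "'a::cx_algebra_1"
  assumes "\<xi>\<^sup>2 - \<xi> \<in> cspectrum c"
  shows "\<xi> \<in> cspectrum (M2 1 1 c 0)"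
proof (rule ccontr)
  define L where "L = scaleC \<xi> (1::'a)"
  assume "\<xi> \<notin> cspectrum (M2 1 1 c 0)"
  moreover have "M2 1 1 c 0 - scaleC \<xi> 1 = M2 (1 - L) 1 c (- L)"
    by (simp add: one_m2_eq L_def)
  ultimately obtain Y where Y: "M2 (1 - L) 1 c (- L) * Y = 1" "Y * M2 (1 - L) 1 c (- L) = 1"
    by (auto simp: cspectrum_def inv_in_def)
  obtain p q r s where Yq: "Y = M2 p q r s"
    by (cases Y)
  have "(1 - L) * q + s = 0" and cq: "c * q - L * s = 1" and qc: "q * L * (1 - L) + q * c = 1"
    using Y by (auto simp: Yq one_m2_eq)
  then have s: "s = L * q - q"
    by (simp add: algebra_simps eq_neg_iff_add_eq_0 [symmetric])
  have "(c - (L * L - L)) * q = c * q - L * (L * q - q)"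
    by (simp add: algebra_simps)
  with cq s have "(c - (L * L - L)) * q = 1"
    by simp
  moreover have "q * (c - (L * L - L)) = 1"
    using qc by (simp add: algebra_simps)
  moreover have "scaleC (\<xi>\<^sup>2 - \<xi>) 1 = L * L - L"
    by (simp add: L_def scaleC_diff_left scaleC_mult_left scaleC_scaleC power2_eq_square)
  ultimately have "inv_in (c - scaleC (\<xi>\<^sup>2 - \<xi>) 1)"
    by (auto simp: inv_in_def)
  with assms show False
    by (simp add: cspectrum_def)
qed

lemma g_hirano_companion_if_root:
  fixes c t :: "'a::cx_algebra_1"
  assumes "t * t + t = c" "qnil t"
  shows "g_hirano (M2 1 1 c 0)"
proof (rule g_hirano_if_quadratic)
  show "M2 1 1 c 0 * m2_diag t = m2_diag t * M2 1 1 c 0"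
    using assms(1) by (intro m2_diag_commute_companion) (auto simp: algebra_simps)
  show "M2 1 1 c 0 * M2 1 1 c 0 = M2 1 1 c 0 + m2_diag t * m2_diag t + m2_diag t"
    using assms(1) by (simp only: companion_mult_self m2_diag_mult m2_diag_add add.assoc)
  show "qnil (m2_diag t)"
    using assms(2) by (simp add: qnil_def cspectrum_m2_diag)
qed

lemma cspectrum_subset_if_g_hirano_companion:
  fixes c :: "'a::cx_algebra_1"
  assumes "g_hirano (M2 1 1 c 0)"
  shows "cspectrum c \<subseteq> {0}"
proof
  fix z
  assume z: "z \<in> cspectrum c"
  obtain \<xi> where \<xi>: "\<xi>\<^sup>2 - \<xi> = z" "\<xi> \<noteq> -1"
  proof -
    define \<xi> where "\<xi> = (1 + csqrt (1 + 4 * z)) / 2"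
    have "\<xi>\<^sup>2 - \<xi> = ((csqrt (1 + 4 * z))\<^sup>2 - 1) / 4"
      by (simp add: \<xi>_def field_simps power2_eq_square)
    then have "\<xi>\<^sup>2 - \<xi> = z"
      by simp
    then show ?thesis
      using that [of \<xi>] that [of 2] by (cases "\<xi> = -1") (auto simp: power2_eq_square)
  qed
  have "\<xi> \<in> cspectrum (M2 1 1 c 0)"
    using \<xi>(1) z by (intro cspectrum_companion) simp
  with g_hirano_cspectrum [OF assms] \<xi> show "z \<in> {0}"
    by (auto simp: power2_eq_square)
qed

definition norm_qnil :: "'a::real_normed_algebra_1 \<Rightarrow> bool" where
  "norm_qnil c \<longleftrightarrow> (\<forall>r>0. eventually (\<lambda>n. norm (c ^ n) \<le> r ^ n) sequentially)"

lemma norm_qnil_mult: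
  fixes c d :: "'a::real_normed_algebra_1"
  assumes "norm_qnil c" "c * d = d * c"
  shows "norm_qnil (c * d)"
  unfolding norm_qnil_def
proof (intro allI impI)
  fix r :: real
  assume r: "r > 0"
  define s where "s = r / (norm d + 1)"
  have s: "s > 0" "s * norm d \<le> r"
    using r by (simp_all add: s_def field_simps add_pos_nonneg)
  from assms(1) s(1) have "eventually (\<lambda>n. norm (c ^ n) \<le> s ^ n) sequentially"
    by (simp add: norm_qnil_def)
  then show "eventually (\<lambda>n. norm ((c * d) ^ n) \<le> r ^ n) sequentially"
  proof eventually_elim
    case (elim n)
    have "norm ((c * d) ^ n) \<le> norm (c ^ n) * norm (d ^ n)"
      by (simp add: power_mult_commuting [OF assms(2)] norm_mult_ineq)
    also have "\<dots> \<le> s ^ n * norm d ^ n"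
      using elim s by (intro mult_mono norm_power_ineq) auto
    also have "\<dots> \<le> r ^ n"
      using s by (simp add: power_mult_distrib [symmetric] power_mono)
    finally show ?case .
  qed
qed

lemma norm_qnil_imp_summable:
  assumes "norm_qnil c"
  shows "summable (\<lambda>n. norm (c ^ n))"
proof (rule summable_comparison_test_ev)
  show "eventually (\<lambda>n. norm (norm (c ^ n)) \<le> (1/2) ^ n) sequentially"
    using assms by (simp add: norm_qnil_def)
qed (simp add: summable_geometric)

lemma inv_in_one_minus_if_summable:
  fixes v :: "'a::{real_normed_algebra_1, banach}"
  assumes "summable (\<lambda>n. norm (v ^ n))"
  shows "inv_in (1 - v)"
proof -
  have sums: "(\<lambda>n. \<Sum>j<n. v ^ j) \<longlonglongrightarrow> (\<Sum>j. v ^ j)"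
    using summable_LIMSEQ [OF summable_norm_cancel [OF assms]] .
  have "(\<lambda>n. v ^ n) \<longlonglongrightarrow> 0"
    using assms summable_LIMSEQ_zero tendsto_norm_zero_iff by blast
  then have "(\<lambda>n. 1 - v ^ n) \<longlonglongrightarrow> 1"
    by (auto intro: tendsto_eq_intros)
  moreover have "(\<lambda>n. 1 - v ^ n) \<longlonglongrightarrow> (1 - v) * (\<Sum>j. v ^ j)"
    unfolding ring_one_diff_power_eq(1) by (rule tendsto_mult [OF tendsto_const sums])
  moreover have "(\<lambda>n. 1 - v ^ n) \<longlonglongrightarrow> (\<Sum>j. v ^ j) * (1 - v)"
    unfolding ring_one_diff_power_eq(2) by (rule tendsto_mult [OF sums tendsto_const])
  ultimately have "(1 - v) * (\<Sum>j. v ^ j) = 1" "(\<Sum>j. v ^ j) * (1 - v) = 1"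
    by (auto intro: LIMSEQ_unique)
  then show ?thesis
    by (auto simp: inv_in_def)
qed

lemma norm_qnil_not_inv_in:
  fixes v :: "'a::real_normed_algebra_1"
  assumes "norm_qnil v"
  shows "\<not> inv_in v"
proof
  assume "inv_in v"
  then obtain b where b: "v * b = 1" "b * v = 1"
    by (auto simp: inv_in_def)
  then have "norm_qnil (1::'a)"
    using norm_qnil_mult [OF assms, of b] by simp
  then have "summable (\<lambda>n. norm ((1::'a) ^ n))"
    by (rule norm_qnil_imp_summable)
  then show False
    by (simp add: summable_const_iff)
qed

lemma norm_qnil_imp_qnil:
  fixes c :: "'a::cx_banach_algebra_1"
  assumes "norm_qnil c"
  shows "qnil c"
proof -
  have "z \<notin> cspectrum c" if "z \<noteq> 0" for z
  proof -
    have "norm_qnil (c * scaleC (1 / z) 1)"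
      using assms by (rule norm_qnil_mult) (simp add: scaleC_one_commute)
    then have "inv_in (1 - scaleC (1 / z) c)"
      by (simp add: scaleC_mult_right inv_in_one_minus_if_summable norm_qnil_imp_summable)
    with that show ?thesis
      by (simp add: inv_in_one_minus_scaleC_iff)
  qed
  moreover have "0 \<in> cspectrum c"
    using norm_qnil_not_inv_in [OF assms] by (simp add: cspectrum_def)
  ultimately show ?thesis
    by (auto simp: qnil_def)
qed

section \<open>Resolvents on the closed unit disc\<close>

lemma norm_mult_mult_le:
  fixes x y z :: "'a::real_normed_algebra"
  shows "norm (x * y * z) \<le> norm x * norm y * norm z"
  by (meson mult_right_mono norm_ge_zero norm_mult_ineq order_trans)

lemma norm_diff_inverses_le:
  fixes a a' b b' :: "'a::real_normed_algebra_1"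
  assumes "a * b = 1" "b' * a' = 1" and small: "norm (a' - a) * norm b \<le> 1/2"
  shows "norm (b' - b) \<le> 2 * norm b ^ 2 * norm (a' - a)"
proof -
  have "norm (b' - b) = norm (b' * (a - a') * b)"
    using diff_inverses [OF assms(1,2)] by simp
  also have "\<dots> \<le> norm b' * norm (a - a') * norm b"
    by (rule norm_mult_mult_le)
  finally have diff: "norm (b' - b) \<le> norm b' * (norm (a' - a) * norm b)"
    by (simp add: norm_minus_commute mult.assoc)
  have "norm b' * (norm (a' - a) * norm b) \<le> norm b' * (1/2)"
    using small by (rule mult_left_mono) simp
  with diff norm_triangle_sub [of b' b] have "norm b' \<le> 2 * norm b"
    by linarith
  then have "norm b' * (norm (a' - a) * norm b) \<le> 2 * norm b * (norm (a' - a) * norm b)"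
    by (rule mult_right_mono) simp
  with diff show ?thesis
    by (simp add: power2_eq_square mult_ac)
qed

lemma norm_resolvent_diff_le:
  fixes u :: "'a::cx_banach_algebra_1"
  assumes "inv_in (1 - scaleC l u)" "inv_in (1 - scaleC m u)"
    and "cmod (l - m) * norm u * norm (the_inverse (1 - scaleC m u)) \<le> 1/2"
  shows "norm (the_inverse (1 - scaleC l u) - the_inverse (1 - scaleC m u))
    \<le> 2 * norm (the_inverse (1 - scaleC m u)) ^ 2 * (norm u * cmod (l - m))"
proof -
  have "(1 - scaleC l u) - (1 - scaleC m u) = scaleC (m - l) u"
    by (simp add: scaleC_diff_left)
  then have eq: "norm ((1 - scaleC l u) - (1 - scaleC m u)) = norm u * cmod (l - m)"
    by (simp add: norm_scaleC norm_minus_commute)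
  have "norm (the_inverse (1 - scaleC l u) - the_inverse (1 - scaleC m u))
      \<le> 2 * norm (the_inverse (1 - scaleC m u)) ^ 2 * norm ((1 - scaleC l u) - (1 - scaleC m u))"
    using assms eq
    by (intro norm_diff_inverses_le) (simp_all add: right_inverse_the_inverse left_inverse_the_inverse mult_ac)
  with eq show ?thesis
    by simp
qed

lemma continuous_on_resolvent:
  fixes u :: "'a::cx_banach_algebra_1"
  assumes "\<And>l. l \<in> S \<Longrightarrow> inv_in (1 - scaleC l u)"
  shows "continuous_on S (\<lambda>l. the_inverse (1 - scaleC l u))"
  unfolding continuous_on_def
proof
  define g where "g l = the_inverse (1 - scaleC l u)" for l
  fix m
  assume m: "m \<in> S"
  have "((\<lambda>l. cmod (l - m) * norm u * norm (g m)) \<longlongrightarrow> 0) (at m within S)"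
    by (auto intro!: tendsto_eq_intros)
  then have "eventually (\<lambda>l. cmod (l - m) * norm u * norm (g m) < 1/2) (at m within S)"
    by (rule order_tendstoD) simp
  moreover have "eventually (\<lambda>l. l \<in> S) (at m within S)"
    by (simp add: eventually_at_filter)
  ultimately have "eventually (\<lambda>l. norm (g l - g m) \<le> 2 * norm (g m) ^ 2 * (norm u * cmod (l - m)))
      (at m within S)"
    by eventually_elim (use assms m in \<open>auto simp: g_def intro: norm_resolvent_diff_le\<close>)
  moreover have "((\<lambda>l. 2 * norm (g m) ^ 2 * (norm u * cmod (l - m))) \<longlongrightarrow> 0) (at m within S)"
    by (auto intro!: tendsto_eq_intros)
  ultimately have "((\<lambda>l. g l - g m) \<longlongrightarrow> 0) (at m within S)"
    by (rule Lim_null_comparison)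
  then show "((\<lambda>l. the_inverse (1 - scaleC l u)) \<longlongrightarrow> the_inverse (1 - scaleC m u)) (at m within S)"
    unfolding g_def by (rule LIM_zero_cancel)
qed

lemma resolvent_lipschitz_on_disc:
  fixes u :: "'a::cx_banach_algebra_1"
  assumes inv: "\<And>l. cmod l \<le> 1 \<Longrightarrow> inv_in (1 - scaleC l u)"
  obtains L where "L \<ge> 0" "\<And>l m. cmod l \<le> 1 \<Longrightarrow> cmod m \<le> 1 \<Longrightarrow>
    norm (the_inverse (1 - scaleC l u) - the_inverse (1 - scaleC m u)) \<le> L * cmod (l - m)"
proof -
  define g where "g l = the_inverse (1 - scaleC l u)" for l
  have "compact (g ` cball 0 1)"
    using inv unfolding g_def by (intro compact_continuous_image continuous_on_resolvent) auto
  then obtain B where B: "\<And>l. cmod l \<le> 1 \<Longrightarrow> norm (g l) \<le> B"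
    by (meson bounded_iff compact_imp_bounded image_eqI mem_cball_0)
  have B0: "B \<ge> 0"
    using order_trans [OF norm_ge_zero B [of 0]] by simp
  have "norm (g l - g m) \<le> (B * B * norm u) * cmod (l - m)" if "cmod l \<le> 1" "cmod m \<le> 1" for l m
  proof -
    have "g l - g m = g l * scaleC (l - m) u * g m"
      using diff_inverses [of "1 - scaleC m u" "g m" "g l" "1 - scaleC l u"] inv that
      by (simp add: g_def right_inverse_the_inverse left_inverse_the_inverse scaleC_diff_left)
    also have "norm \<dots> \<le> norm (g l) * (cmod (l - m) * norm u) * norm (g m)"
      using norm_mult_mult_le [of "g l" "scaleC (l - m) u" "g m"] by (simp add: norm_scaleC)
    also have "\<dots> \<le> B * (cmod (l - m) * norm u) * B"
      using B B0 that by (intro mult_mono) auto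
    finally show ?thesis
      by (simp add: mult_ac)
  qed
  moreover have "B * B * norm u \<ge> 0"
    using B0 by simp
  ultimately show ?thesis
    using that unfolding g_def by blast
qed

lemma exp_root_unity_power_eq_1:
  assumes "K > 0"
  shows "exp (2 * of_real pi * \<i> / of_nat K) ^ j = 1 \<longleftrightarrow> K dvd j"
proof -
  have "exp (2 * of_real pi * \<i> / of_nat K) ^ j = exp (2 * of_real pi * \<i> * of_nat j / of_nat K)"
    by (simp add: mult_ac flip: exp_of_nat_mult)
  then show ?thesis
    using complex_root_unity_eq_1 [of K j] assms by simp
qed

lemma sum_powers_root_unity:
  fixes \<omega> :: complex
  assumes "\<omega> ^ K = 1" "\<And>j. 0 < j \<Longrightarrow> j < K \<Longrightarrow> \<omega> ^ j \<noteq> 1" "j < K"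
  shows "(\<Sum>k<K. (\<omega> ^ j) ^ k) = (if j = 0 then of_nat K else 0)"
proof (cases "j = 0")
  case False
  then have "\<omega> ^ j \<noteq> 1" "(\<omega> ^ j) ^ K = 1"
    using assms by (simp_all add: power_mult [symmetric] mult.commute [of j] power_mult)
  with False show ?thesis
    using geometric_sum [of "\<omega> ^ j" K] by simp
qed simp

lemma resolvent_average_roots_unity:
  fixes y :: "'a::cx_algebra_1" and \<omega> \<theta> :: complex and G :: "nat \<Rightarrow> 'a"
  assumes \<omega>: "\<omega> ^ K = 1" "\<And>j. 0 < j \<Longrightarrow> j < K \<Longrightarrow> \<omega> ^ j \<noteq> 1"
    and GL: "\<And>k. k < K \<Longrightarrow> G k * (1 - scaleC (\<theta> * \<omega> ^ k) y) = 1"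
    and GR: "\<And>k. k < K \<Longrightarrow> (1 - scaleC (\<theta> * \<omega> ^ k) y) * G k = 1"
  shows "(1 - scaleC (\<theta> ^ K) (y ^ K)) * (\<Sum>k<K. G k) = of_nat K"
    and "(\<Sum>k<K. G k) * (1 - scaleC (\<theta> ^ K) (y ^ K)) = of_nat K"
proof -
  define v where "v k = scaleC (\<theta> * \<omega> ^ k) y" for k
  have vK: "v k ^ K = scaleC (\<theta> ^ K) (y ^ K)" for k
  proof -
    have "(\<omega> ^ k) ^ K = (\<omega> ^ K) ^ k"
      by (simp only: power_mult [symmetric] mult.commute)
    then show ?thesis
      using \<omega>(1) by (simp add: v_def scaleC_power power_mult_distrib)
  qed
  have "(1 - scaleC (\<theta> ^ K) (y ^ K)) * G k = (\<Sum>j<K. v k ^ j)"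
    "G k * (1 - scaleC (\<theta> ^ K) (y ^ K)) = (\<Sum>j<K. v k ^ j)" if "k < K" for k
  proof -
    have "(1 - scaleC (\<theta> ^ K) (y ^ K)) * G k = (\<Sum>j<K. v k ^ j) * ((1 - v k) * G k)"
      "G k * (1 - scaleC (\<theta> ^ K) (y ^ K)) = (G k * (1 - v k)) * (\<Sum>j<K. v k ^ j)"
      using ring_one_diff_power_eq [of "v k" K] vK [of k] by (simp_all add: mult.assoc)
    then show "(1 - scaleC (\<theta> ^ K) (y ^ K)) * G k = (\<Sum>j<K. v k ^ j)"
      "G k * (1 - scaleC (\<theta> ^ K) (y ^ K)) = (\<Sum>j<K. v k ^ j)"
      using GL [OF that] GR [OF that] by (simp_all add: v_def)
  qed
  moreover have "(\<Sum>k<K. \<Sum>j<K. v k ^ j) = of_nat K"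
  proof -
    have "(\<Sum>k<K. \<Sum>j<K. v k ^ j) = (\<Sum>j<K. scaleC (\<theta> ^ j * (\<Sum>k<K. (\<omega> ^ j) ^ k)) (y ^ j))"
      by (subst sum.swap) (simp add: v_def scaleC_power scaleC_sum_left sum_distrib_left
          power_mult_distrib flip: power_mult mult.commute)
    also have "\<dots> = (\<Sum>j<K. if j = 0 then of_nat K else 0)"
      by (rule sum.cong) (simp_all add: sum_powers_root_unity [OF \<omega>] scaleC_of_nat)
    also have "\<dots> = of_nat K"
      by (cases K) (simp_all add: sum.delta)
    finally show ?thesis .
  qed
  ultimately show "(1 - scaleC (\<theta> ^ K) (y ^ K)) * (\<Sum>k<K. G k) = of_nat K"
    "(\<Sum>k<K. G k) * (1 - scaleC (\<theta> ^ K) (y ^ K)) = of_nat K"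
    by (simp_all add: sum_distrib_left sum_distrib_right)
qed

lemma norm_le_if_near_inverses:
  fixes w A B :: "'a::real_normed_algebra_1"
  assumes A: "(1 - w) * A = of_nat K" and B: "B * (1 + w) = of_nat K"
    and AB: "norm (A - B) \<le> of_nat K * \<delta>" and "K > 0"
  shows "2 * norm w \<le> (1 + norm w)\<^sup>2 * \<delta>"
proof -
  have "(1 - w) * (A - B) * (1 + w) = ((1 - w) * A) * (1 + w) - (1 - w) * (B * (1 + w))"
    by (simp add: algebra_simps)
  also have "\<dots> = of_nat K * (1 + w) - (1 - w) * of_nat K"
    by (simp only: A B)
  also have "\<dots> = of_nat K * w + of_nat K * w"
    by (simp add: algebra_simps mult_of_nat_commute)
  also have "\<dots> = real (2 * K) *\<^sub>R w"
    by (simp only: scaleR_conv_of_real of_real_of_nat_eq) (simp only: mult_2 of_nat_add distrib_right)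
  finally have "real (2 * K) * norm w = norm ((1 - w) * (A - B) * (1 + w))"
    by simp
  also have "\<dots> \<le> norm (1 - w) * norm (A - B) * norm (1 + w)"
    by (rule norm_mult_mult_le)
  also have "\<dots> \<le> (1 + norm w) * (of_nat K * \<delta>) * (1 + norm w)"
    using norm_triangle_ineq4 [of 1 w] norm_triangle_ineq [of 1 w] AB order_trans [OF norm_ge_zero AB]
    by (intro mult_mono) auto
  finally have "real K * (2 * norm w) \<le> real K * ((1 + norm w)\<^sup>2 * \<delta>)"
    by (simp add: power2_eq_square mult_ac)
  then show ?thesis
    using \<open>K > 0\<close> by simp
qed

text \<open>Since \<open>\<eta> = e\<^sup>i\<^sup>\<pi>\<^sup>/\<^sup>K\<close> has \<open>\<eta>\<^sup>K = -1\<close>, averaging the resolvent over the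
  \<open>K\<close>-th roots of unity and over their rotations by \<open>\<eta>\<close> inverts \<open>1 - u\<^sup>K\<close> and \<open>1 + u\<^sup>K\<close>
  (up to the factor \<open>K\<close>); the two averages differ by at most \<open>K L |1 - \<eta>|\<close>, and
  \<open>2K u\<^sup>K = (1 - u\<^sup>K)(S\<^sub>A - S\<^sub>B)(1 + u\<^sup>K)\<close>.\<close>

lemma norm_power_resolvent_estimate:
  fixes u :: "'a::cx_banach_algebra_1" and g :: "complex \<Rightarrow> 'a"
  assumes gL: "\<And>l. cmod l \<le> 1 \<Longrightarrow> g l * (1 - scaleC l u) = 1"
    and gR: "\<And>l. cmod l \<le> 1 \<Longrightarrow> (1 - scaleC l u) * g l = 1"
    and Lip: "\<And>l m. cmod l \<le> 1 \<Longrightarrow> cmod m \<le> 1 \<Longrightarrow> norm (g l - g m) \<le> L * cmod (l - m)"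
    and "L \<ge> 0" "K > 0"
  shows "2 * norm (u ^ K) \<le> (1 + norm (u ^ K))\<^sup>2 * (L * cmod (1 - exp (of_real (pi / K) * \<i>)))"
proof -
  define \<omega> where "\<omega> = exp (2 * of_real pi * \<i> / of_nat K)"
  define \<eta> where "\<eta> = exp (of_real (pi / K) * \<i>)"
  define w where "w = u ^ K"
  define SA where "SA = (\<Sum>k<K. g (\<omega> ^ k))"
  define SB where "SB = (\<Sum>k<K. g (\<eta> * \<omega> ^ k))"
  have \<omega>: "\<omega> ^ K = 1" "\<And>j. 0 < j \<Longrightarrow> j < K \<Longrightarrow> \<omega> ^ j \<noteq> 1"
    using exp_root_unity_power_eq_1 [OF \<open>K > 0\<close>] by (auto simp: \<omega>_def dest: dvd_imp_le)
  have norms: "cmod (\<omega> ^ k) = 1" "cmod \<eta> = 1" for k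
    by (simp_all add: \<omega>_def \<eta>_def norm_power norm_exp_eq_Re)
  have "\<eta> ^ K = exp (of_nat K * (of_real (pi / K) * \<i>))"
    by (simp only: \<eta>_def exp_of_nat_mult)
  then have \<eta>K: "\<eta> ^ K = -1"
    using \<open>K > 0\<close> by simp
  have "(1 - scaleC (1 ^ K) (u ^ K)) * SA = of_nat K"
    unfolding SA_def by (intro resolvent_average_roots_unity(1) [OF \<omega>]) (simp_all add: gL gR norms)
  then have A: "(1 - w) * SA = of_nat K"
    by (simp add: w_def scaleC_one)
  have "SB * (1 - scaleC (\<eta> ^ K) (u ^ K)) = of_nat K"
    unfolding SB_def
    by (intro resolvent_average_roots_unity(2) [OF \<omega>]) (simp_all add: gL gR norms norm_mult)
  then have B: "SB * (1 + w) = of_nat K"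
    by (simp add: w_def \<eta>K scaleC_minus_left scaleC_one)
  have "norm (g (\<omega> ^ k) - g (\<eta> * \<omega> ^ k)) \<le> L * cmod (1 - \<eta>)" for k
  proof -
    have "\<omega> ^ k - \<eta> * \<omega> ^ k = (1 - \<eta>) * \<omega> ^ k"
      by (simp add: algebra_simps)
    then show ?thesis
      using Lip [of "\<omega> ^ k" "\<eta> * \<omega> ^ k"] norms by (simp add: norm_mult)
  qed
  then have "norm (\<Sum>k<K. g (\<omega> ^ k) - g (\<eta> * \<omega> ^ k)) \<le> (\<Sum>k<K. L * cmod (1 - \<eta>))"
    by (intro sum_norm_le)
  then have SAB: "norm (SA - SB) \<le> of_nat K * (L * cmod (1 - \<eta>))"
    by (simp add: SA_def SB_def sum_subtractf)
  from norm_le_if_near_inverses [OF A B SAB \<open>K > 0\<close>] show ?thesis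
    by (simp add: w_def \<eta>_def)
qed

lemma norm_power_scaled_estimate:
  fixes u :: "'a::cx_banach_algebra_1"
  assumes inv: "\<And>l. cmod l \<le> 1 \<Longrightarrow> inv_in (1 - scaleC l u)"
    and Lip: "\<And>l m. cmod l \<le> 1 \<Longrightarrow> cmod m \<le> 1 \<Longrightarrow>
      norm (the_inverse (1 - scaleC l u) - the_inverse (1 - scaleC m u)) \<le> L * cmod (l - m)"
    and "L \<ge> 0" "K > 0" "0 \<le> s" "s \<le> 1"
  shows "2 * (s * norm (u ^ K)) \<le> (1 + s * norm (u ^ K))\<^sup>2 * (L * cmod (1 - exp (of_real (pi / K) * \<i>)))"
proof -
  define \<rho> where "\<rho> = root K s"
  define g where "g l = the_inverse (1 - scaleC (of_real \<rho> * l) u)" for l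
  have \<rho>: "0 \<le> \<rho>" "\<rho> \<le> 1" "\<rho> ^ K = s"
    using assms(4-6) by (simp_all add: \<rho>_def)
  have disc: "cmod (of_real \<rho> * l) \<le> 1" if "cmod l \<le> 1" for l
    using \<rho> that by (simp add: norm_mult mult_le_one)
  have scale: "scaleC l (scaleC (of_real \<rho>) u) = scaleC (of_real \<rho> * l) u" for l
    by (simp add: scaleC_scaleC mult.commute)
  have "2 * norm (scaleC (of_real \<rho>) u ^ K)
      \<le> (1 + norm (scaleC (of_real \<rho>) u ^ K))\<^sup>2 * (L * cmod (1 - exp (of_real (pi / K) * \<i>)))"
  proof (rule norm_power_resolvent_estimate [where g = g])
    fix l m
    assume l: "cmod l \<le> 1" and m: "cmod m \<le> 1"
    show "g l * (1 - scaleC l (scaleC (of_real \<rho>) u)) = 1"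
      "(1 - scaleC l (scaleC (of_real \<rho>) u)) * g l = 1"
      using inv [OF disc [OF l]]
      by (simp_all add: g_def scale left_inverse_the_inverse right_inverse_the_inverse)
    have "norm (g l - g m) \<le> L * cmod (of_real \<rho> * l - of_real \<rho> * m)"
      unfolding g_def by (rule Lip [OF disc [OF l] disc [OF m]])
    also have "\<dots> = L * (\<rho> * cmod (l - m))"
      using \<rho>(1) by (simp add: norm_mult flip: right_diff_distrib)
    also have "\<dots> \<le> L * cmod (l - m)"
      using \<rho> \<open>L \<ge> 0\<close> by (intro mult_left_mono mult_left_le_one_le) auto
    finally show "norm (g l - g m) \<le> L * cmod (l - m)" .
  qed (use assms in auto)
  moreover have "norm (scaleC (of_real \<rho>) u ^ K) = s * norm (u ^ K)"
    using \<rho> by (simp add: scaleC_power norm_scaleC norm_power)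
  ultimately show ?thesis
    by simp
qed

lemma le_of_scaled_quadratic_bound:
  fixes x e :: real
  assumes "0 \<le> x" "0 \<le> e" "e < 1/8"
    and est: "\<And>s. 0 \<le> s \<Longrightarrow> s \<le> 1 \<Longrightarrow> 2 * (s * x) \<le> (1 + s * x)\<^sup>2 * e"
  shows "x \<le> 9/8 * e"
proof -
  have half: "x \<le> 1/2"
  proof (rule ccontr)
    assume "\<not> x \<le> 1/2"
    then have "2 * (1 / (2 * x) * x) \<le> (1 + 1 / (2 * x) * x)\<^sup>2 * e"
      by (intro est) auto
    with \<open>\<not> x \<le> 1/2\<close> \<open>e < 1/8\<close> show False
      by (simp add: power2_eq_square)
  qed
  have "2 * x \<le> (1 + x)\<^sup>2 * e"
    using est [of 1] by simp
  also have "\<dots> \<le> (3/2)\<^sup>2 * e"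
    using half assms by (intro mult_right_mono power_mono) auto
  finally show ?thesis
    by (simp add: power2_eq_square)
qed

text \<open>An elementary substitute for the Cauchy estimates behind Gelfand's spectral radius
  formula.\<close>

lemma powers_tendsto_zero_if_resolvent_on_disc:
  fixes u :: "'a::cx_banach_algebra_1"
  assumes inv: "\<And>l. cmod l \<le> 1 \<Longrightarrow> inv_in (1 - scaleC l u)"
  shows "(\<lambda>n. u ^ n) \<longlonglongrightarrow> 0"
proof -
  obtain L where L: "L \<ge> 0" "\<And>l m. cmod l \<le> 1 \<Longrightarrow> cmod m \<le> 1 \<Longrightarrow>
    norm (the_inverse (1 - scaleC l u) - the_inverse (1 - scaleC m u)) \<le> L * cmod (l - m)"
    using resolvent_lipschitz_on_disc [OF inv] by blast
  define e where "e K = L * cmod (1 - exp (of_real (pi / real K) * \<i>))" for K :: nat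
  have e: "e \<longlonglongrightarrow> 0"
    unfolding e_def by (auto intro!: tendsto_eq_intros lim_const_over_n)
  have "eventually (\<lambda>K. e K < 1/8 \<and> K > 0) sequentially"
    using order_tendstoD(2) [OF e, of "1/8"] eventually_gt_at_top [of 0]
    by (auto intro: eventually_conj)
  then have "eventually (\<lambda>K. norm (norm (u ^ K)) \<le> 9/8 * e K) sequentially"
  proof eventually_elim
    case (elim K)
    have "norm (u ^ K) \<le> 9/8 * e K"
    proof (rule le_of_scaled_quadratic_bound)
      show "0 \<le> e K" "e K < 1/8"
        using L(1) elim by (simp_all add: e_def)
      show "2 * (s * norm (u ^ K)) \<le> (1 + s * norm (u ^ K))\<^sup>2 * e K" if "0 \<le> s" "s \<le> 1" for s
        using norm_power_scaled_estimate [OF inv L(2) L(1)] elim that by (simp add: e_def)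
    qed simp
    then show ?case
      by simp
  qed
  moreover have "(\<lambda>K. 9/8 * e K) \<longlonglongrightarrow> 0"
    using tendsto_mult_right_zero [OF e] by simp
  ultimately have "(\<lambda>K. norm (u ^ K)) \<longlonglongrightarrow> 0"
    by (rule Lim_null_comparison)
  then show ?thesis
    by (simp add: tendsto_norm_zero_iff)
qed

lemma qnil_imp_norm_qnil:
  fixes c :: "'a::cx_banach_algebra_1"
  assumes "qnil c"
  shows "norm_qnil c"
  unfolding norm_qnil_def
proof (intro allI impI)
  fix r :: real
  assume "r > 0"
  define u where "u = scaleC (of_real (1 / r)) c"
  have "inv_in (1 - scaleC l u)" for l
  proof (cases "l = 0")
    case False
    then have "1 / (l * of_real (1 / r)) \<notin> cspectrum c"
      using assms \<open>r > 0\<close> by (simp add: qnil_def)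
    then show ?thesis
      using False \<open>r > 0\<close> by (simp add: u_def scaleC_scaleC inv_in_one_minus_scaleC_iff)
  qed simp
  then have "(\<lambda>n. u ^ n) \<longlonglongrightarrow> 0"
    by (intro powers_tendsto_zero_if_resolvent_on_disc)
  then have "eventually (\<lambda>n. norm (u ^ n) < 1) sequentially"
    using order_tendstoD(2) [OF tendsto_norm_zero] by fastforce
  then show "eventually (\<lambda>n. norm (c ^ n) \<le> r ^ n) sequentially"
  proof eventually_elim
    case (elim n)
    have "norm (u ^ n) = norm (c ^ n) / r ^ n"
      using \<open>r > 0\<close> by (simp add: u_def scaleC_power norm_scaleC norm_power norm_divide power_divide)
    with elim \<open>r > 0\<close> show ?case
      by simp
  qed
qed

lemma cspectrum_nonempty:
  fixes c :: "'a::cx_banach_algebra_1"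
  shows "cspectrum c \<noteq> {}"
proof
  assume empty: "cspectrum c = {}"
  then have "0 \<notin> cspectrum c"
    by simp
  then obtain b where b: "c * b = 1" "b * c = 1"
    by (auto simp: cspectrum_def inv_in_def)
  have "inv_in (1 - scaleC l c)" for l
    using empty by (cases "l = 0") (simp_all add: inv_in_one_minus_scaleC_iff)
  then have "(\<lambda>n. c ^ n) \<longlonglongrightarrow> 0"
    by (intro powers_tendsto_zero_if_resolvent_on_disc)
  moreover have "inv_in (1 - scaleC l b)" for l
  proof -
    have "(c - scaleC l 1) * b = 1 - scaleC l b"
      using b by (simp add: algebra_simps scaleC_mult_left)
    moreover have "inv_in ((c - scaleC l 1) * b)"
      using empty b by (intro inv_in_mult) (auto simp: cspectrum_def inv_in_def)
    ultimately show ?thesis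
      by simp
  qed
  then have "(\<lambda>n. b ^ n) \<longlonglongrightarrow> 0"
    by (intro powers_tendsto_zero_if_resolvent_on_disc)
  ultimately have "(\<lambda>n. c ^ n * b ^ n) \<longlonglongrightarrow> 0 * 0"
    by (rule tendsto_mult)
  then have "(\<lambda>n. 1::'a) \<longlonglongrightarrow> 0"
    by (simp add: left_right_inverse_power [OF b(1)])
  then show False
    by (simp add: LIMSEQ_const_iff)
qed

section \<open>Square roots by the binomial series\<close>

lemma abs_gchoose_half_le_1: "\<bar>(1/2::real) gchoose k\<bar> \<le> 1"
proof (induction k)
  case (Suc k)
  have "of_nat (Suc k) * ((1/2::real) gchoose Suc k) = (1/2 - of_nat k) * ((1/2) gchoose k)"
    using gbinomial_mult_1 [of "1/2::real" k] by (simp add: algebra_simps)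
  then have "of_nat (Suc k) * \<bar>(1/2::real) gchoose Suc k\<bar> = \<bar>1/2 - of_nat k\<bar> * \<bar>(1/2) gchoose k\<bar>"
    by (metis abs_mult abs_of_nat)
  also have "\<dots> \<le> of_nat (Suc k) * 1"
    using Suc by (intro mult_mono) auto
  finally show ?case
    by simp
qed simp

lemma summable_norm_scaled_powers:
  fixes c :: "'a::real_normed_algebra_1"
  assumes "norm_qnil c" "\<And>n. \<bar>a n\<bar> \<le> 1"
  shows "summable (\<lambda>n. norm (a n *\<^sub>R c ^ n))"
proof (rule summable_comparison_test' [OF norm_qnil_imp_summable [OF assms(1)]])
  show "norm (norm (a n *\<^sub>R c ^ n)) \<le> norm (c ^ n)" for n
    using assms(2) [of n] by (simp add: mult_left_le_one_le)
qed

lemma Cauchy_product_binomial_half: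
  fixes c :: "'a::real_normed_algebra_1"
  shows "(\<Sum>i\<le>k. (((1/2::real) gchoose i) *\<^sub>R c ^ i) * (((1/2) gchoose (k - i)) *\<^sub>R c ^ (k - i)))
    = ((1::real) gchoose k) *\<^sub>R c ^ k"
proof -
  have "(\<Sum>i\<le>k. (((1/2::real) gchoose i) *\<^sub>R c ^ i) * (((1/2) gchoose (k - i)) *\<^sub>R c ^ (k - i)))
      = (\<Sum>i\<le>k. ((1/2::real) gchoose i) * ((1/2) gchoose (k - i))) *\<^sub>R c ^ k"
    by (simp add: scaleR_sum_left mult.commute flip: power_add)
  also have "(\<Sum>i\<le>k. ((1/2::real) gchoose i) * ((1/2) gchoose (k - i))) = (1/2 + 1/2) gchoose k"
    using gbinomial_Vandermonde [of "1/2::real" "1/2" k] by (simp add: atLeast0AtMost)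
  finally show ?thesis
    by simp
qed

lemma binomial_one_sums:
  fixes c :: "'a::real_normed_algebra_1"
  shows "(\<lambda>k. ((1::real) gchoose k) *\<^sub>R c ^ k) sums (1 + c)"
proof -
  have "(1::real) gchoose k = of_nat (1 choose k)" for k
    using binomial_gbinomial [of 1 k, where 'a = real] by simp
  then have "(\<lambda>k. ((1::real) gchoose k) *\<^sub>R c ^ k) sums (\<Sum>k\<in>{0, 1}. ((1::real) gchoose k) *\<^sub>R c ^ k)"
    by (intro sums_finite) auto
  then show ?thesis
    by simp
qed

lemma sqrt_one_plus_norm_qnil:
  fixes c :: "'a::{real_normed_algebra_1, banach}"
  assumes "norm_qnil c"
  obtains r where "c * r = r * c" "(1 + c * r) * (1 + c * r) = 1 + c"
proof -
  define f where "f n = ((1/2::real) gchoose n) *\<^sub>R c ^ n" for n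
  define r where "r = (\<Sum>n. ((1/2::real) gchoose Suc n) *\<^sub>R c ^ n)"
  have f: "summable (\<lambda>n. norm (f n))" and r: "summable (\<lambda>n. norm (((1/2::real) gchoose Suc n) *\<^sub>R c ^ n))"
    unfolding f_def using abs_gchoose_half_le_1
    by (intro summable_norm_scaled_powers [OF assms]; simp)+
  have "(\<lambda>k. \<Sum>i\<le>k. f i * f (k - i)) sums ((\<Sum>n. f n) * (\<Sum>n. f n))"
    using Cauchy_product_sums [OF f f] .
  then have "(\<lambda>k. ((1::real) gchoose k) *\<^sub>R c ^ k) sums ((\<Sum>n. f n) * (\<Sum>n. f n))"
    by (simp only: f_def Cauchy_product_binomial_half)
  then have square: "(\<Sum>n. f n) * (\<Sum>n. f n) = 1 + c"
    using binomial_one_sums sums_unique2 by blast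
  have "(\<Sum>n. f n) = f 0 + (\<Sum>n. f (Suc n))"
    using suminf_split_head [OF summable_norm_cancel [OF f]] by simp
  also have "\<dots> = 1 + c * r"
    using suminf_mult [OF summable_norm_cancel [OF r], of c] by (simp add: f_def r_def mult.assoc)
  finally have "(\<Sum>n. f n) = 1 + c * r" .
  moreover have "c * r = r * c"
    using suminf_mult [OF summable_norm_cancel [OF r], of c]
      suminf_mult2 [OF summable_norm_cancel [OF r], of c]
    by (simp add: r_def power_commutes)
  ultimately show ?thesis
    using that square by simp
qed

lemma qnil_quadratic_root:
  fixes c :: "'a::cx_banach_algebra_1"
  assumes "qnil c"
  obtains t where "t * t + t = c" "qnil t"
proof -
  have c: "norm_qnil c"
    using assms by (rule qnil_imp_norm_qnil)
  then have "norm_qnil (c * scaleC 4 1)"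
    by (rule norm_qnil_mult) (simp add: scaleC_one_commute)
  then obtain r where r: "c * scaleC 4 1 * r = r * (c * scaleC 4 1)"
    and sq: "(1 + c * scaleC 4 1 * r) * (1 + c * scaleC 4 1 * r) = 1 + c * scaleC 4 1"
    by (rule sqrt_one_plus_norm_qnil)
  have "scaleC 4 (c * r) = scaleC 4 (r * c)"
    using r by (simp add: scaleC_mult_left scaleC_mult_right)
  then have cr: "c * r = r * c"
    by (rule scaleC_cancel_left [rotated]) simp
  define t where "t = c * scaleC 2 r"
  have "c * scaleC 4 1 * r = scaleC 2 t" "c * scaleC 4 1 = scaleC 4 c"
    by (simp_all add: t_def scaleC_mult_left scaleC_mult_right scaleC_scaleC)
  moreover have "(1 + scaleC 2 t) * (1 + scaleC 2 t) = 1 + scaleC 4 (t * t + t)"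
  proof -
    have "scaleC 2 t * scaleC 2 t = scaleC 4 (t * t)" "scaleC 2 t + scaleC 2 t = scaleC 4 t"
      by (simp_all add: scaleC_mult_left scaleC_mult_right scaleC_scaleC flip: scaleC_add_left)
    then show ?thesis
      by (simp add: algebra_simps scaleC_add_right)
  qed
  ultimately have "scaleC 4 (t * t + t) = scaleC 4 c"
    using sq by simp
  then have "t * t + t = c"
    by (rule scaleC_cancel_left [rotated]) simp
  moreover have "norm_qnil t"
    unfolding t_def using c by (rule norm_qnil_mult) (simp add: cr scaleC_mult_left scaleC_mult_right)
  ultimately show ?thesis
    using that norm_qnil_imp_qnil by blast
qed

theorem theorem4p1:
  fixes c :: "'a::cx_banach_algebra_1"
  shows "qnil c \<longleftrightarrow> g_hirano (M2 1 1 c 0 :: 'a m2)"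
proof
  assume "qnil c"
  then obtain t where "t * t + t = c" "qnil t"
    by (rule qnil_quadratic_root)
  then show "g_hirano (M2 1 1 c 0)"
    by (rule g_hirano_companion_if_root)
next
  assume "g_hirano (M2 1 1 c 0 :: 'a m2)"
  then have "cspectrum c \<subseteq> {0}"
    by (rule cspectrum_subset_if_g_hirano_companion)
  with cspectrum_nonempty [of c] show "qnil c"
    by (auto simp: qnil_def)
qed

end
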